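(* Let $X_\lambda$ be a cellular multipointed $d$-space. A continuous map $[0,1]\to|X_\lambda|$ is a directed path of $\vec{\mathrm{Sp}}(X_\lambda)$ if and only if it is of the form $\gamma\phi$ where $\gamma$ is an execution path of $X_\lambda$ or a constant path, and $\phi\in\mathcal{I}(1)$.
   Context: $\mathcal{M}(\ell,\ell')$: non-decreasing surjective continuous maps $[0,\ell]\to[0,\ell']$; $\mathcal{I}(\ell)$: non-decreasing continuous maps $[0,1]\to[0,\ell]$ (constants allowed); $\mu_\ell(t)=t/\ell$ for $\ell>0$. Moore composition $*$ concatenates a path $[0,\ell_1]\to U$ and a path $[0,\ell_2]\to U$ into a path $[0,\ell_1+\ell_2]\to U$; normalized composition of $\gamma_1,\gamma_2:[0,1]\to U$ is $(\gamma_1\mu_{1/2})*(\gamma_2\mu_{1/2})$. A multipointed $d$-space is $(|X|,X^0,\mathbb{P}^{\mathrm{top}}X)$: a space, a set of states $X^0\subset|X|$, a set of continuous maps $[0,1]\to|X|$ (execution paths) with endpoints in $X^0$, closed under precomposition by $\mathcal{M}(1,1)$ and normalized composition. $\vec{\mathrm{Sp}}(X)$ is the directed space with underlying space $|X|$ whose directed paths are all constant paths and all Moore compositions $(\gamma_1\phi_1\mu_{\ell_1})*\dots*(\gamma_n\phi_n\mu_{\ell_n})$ with $n\ge1$, $\ell_i>0$, $\sum\ell_i=1$, $\gamma_i$ execution paths of $X$, $\phi_i\in\mathcal{I}(1)$. For a space $Z$, $\mathrm{Glob}^{\mathrm{top}}(Z)$ is the multipointed $d$-space with underlying space the quotient of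 $\{0,1\}\sqcup Z\times[0,1]$ by $(z,0)\sim0$, $(z,1)\sim1$, states $\{0,1\}$, execution paths $\delta_z\phi$ ($z\in Z$, $\phi\in\mathcal{M}(1,1)$, $\delta_z(t)=(z,t)$). $\mathbf{D}^n$, $\mathbf{S}^{n-1}$: closed $n$-disk and its boundary ($\mathbf{D}^0$ a point, $\mathbf{S}^{-1}=\varnothing$). A cellular multipointed $d$-space is $X_\lambda=\varinjlim_{\nu<\lambda}X_\nu$ for a colimit-preserving functor $\nu\mapsto X_\nu$ on an ordinal $\lambda$ with $X_0=(X^0,X^0,\varnothing)$ and each $X_\nu\to X_{\nu+1}$ a pushout of $\mathrm{Glob}^{\mathrm{top}}(\mathbf{S}^{n_\nu-1})\to\mathrm{Glob}^{\mathrm{top}}(\mathbf{D}^{n_\nu})$ (induced by inclusion) along some $g_\nu$, $n_\nu\ge0$. *)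

theory Defs
  imports "HOL-Analysis.Analysis"
begin

definition Mrep :: "real \<Rightarrow> real \<Rightarrow> (real \<Rightarrow> real) set" where
  "Mrep l l' = {\<phi>. continuous_on {0..l} \<phi> \<and> mono_on {0..l} \<phi> \<and> \<phi> ` {0..l} = {0..l'}}"

definition Irep :: "real \<Rightarrow> (real \<Rightarrow> real) set" where
  "Irep l = {\<phi>. continuous_on {0..1} \<phi> \<and> mono_on {0..1} \<phi> \<and> \<phi> ` {0..1} \<subseteq> {0..l}}"

text \<open>A Moore path is a pair (l, f) with f a path on [0,l]. The Moore composition of
  a list of Moore paths is a path on [0, sum of lengths].\<close>
fun moore :: "(real \<times> (real \<Rightarrow> 'a)) list \<Rightarrow> real \<Rightarrow> 'a" where
  "moore [] t = undefined"
| "moore [(l, f)] t = f t"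
| "moore ((l, f) # rest) t = (if t \<le> l then f t else moore rest (t - l))"

fun moore_composable :: "(real \<times> (real \<Rightarrow> 'a)) list \<Rightarrow> bool" where
  "moore_composable ((l, f) # (l', g) # rest) = (f l = g 0 \<and> moore_composable ((l', g) # rest))"
| "moore_composable _ = True"

definition norm_comp :: "(real \<Rightarrow> 'a) \<Rightarrow> (real \<Rightarrow> 'a) \<Rightarrow> real \<Rightarrow> 'a" where
  "norm_comp g1 g2 = moore [(1/2, \<lambda>t. g1 (t / (1/2))), (1/2, \<lambda>t. g2 (t / (1/2)))]"

text \<open>A multipointed d-space (|X|, X^0, P^top X). Paths are functions real => 'a, of
  which only the restriction to [0,1] is meaningful.\<close>
record 'a mdspace =
  mds_top :: "'a topology"
  mds_states :: "'a set"
  mds_paths :: "(real \<Rightarrow> 'a) set"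

text \<open>Closure of a set of paths under precomposition by M(1,1), normalized composition,
  and (representation artefact) change of values outside [0,1]. This is the set of
  execution paths of a colimit of multipointed d-spaces.\<close>
inductive_set gen_paths :: "(real \<Rightarrow> 'a) set \<Rightarrow> (real \<Rightarrow> 'a) set" for Q where
  base: "\<gamma> \<in> Q \<Longrightarrow> \<gamma> \<in> gen_paths Q"
| reparam: "\<gamma> \<in> gen_paths Q \<Longrightarrow> \<phi> \<in> Mrep 1 1 \<Longrightarrow> \<gamma> \<circ> \<phi> \<in> gen_paths Q"
| comp: "\<gamma>1 \<in> gen_paths Q \<Longrightarrow> \<gamma>2 \<in> gen_paths Q \<Longrightarrow> \<gamma>1 1 = \<gamma>2 0 \<Longrightarrow>
          norm_comp \<gamma>1 \<gamma>2 \<in> gen_paths Q"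
| ext: "\<gamma> \<in> gen_paths Q \<Longrightarrow> (\<forall>t\<in>{0..1}. \<delta> t = \<gamma> t) \<Longrightarrow> \<delta> \<in> gen_paths Q"

definition disk :: "nat \<Rightarrow> (nat \<Rightarrow> real) set" where
  "disk n = {x \<in> topspace (Euclidean_space n). (\<Sum>i<n. x i ^ 2) \<le> 1}"

definition sphere_set :: "nat \<Rightarrow> (nat \<Rightarrow> real) set" where
  "sphere_set n = {x \<in> topspace (Euclidean_space n). (\<Sum>i<n. x i ^ 2) = 1}"

text \<open>Y' is the pushout of Glob(S^{n-1}) -> Glob(D^n) along g : Glob(S^{n-1}) -> Y, with
  Y -> Y' realised as an inclusion. The map Glob(D^n) -> Y' is described by
  Phi : D^n x [0,1] -> Y' (constant on D^n x {0} and on D^n x {1}); g is its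
  restriction to the quotient of {0,1} + S^{n-1} x [0,1].\<close>
definition cell_attach :: "'a mdspace \<Rightarrow> 'a mdspace \<Rightarrow> nat \<Rightarrow> ((nat \<Rightarrow> real) \<times> real \<Rightarrow> 'a) \<Rightarrow> bool" where
  "cell_attach Y Y' n \<Phi> \<longleftrightarrow>
     \<comment> \<open>g is a morphism Glob(S^{n-1}) -> Y\<close>
     (\<exists>a\<in>mds_states Y. \<exists>b\<in>mds_states Y. \<forall>z\<in>disk n. \<Phi> (z, 0) = a \<and> \<Phi> (z, 1) = b)
   \<and> continuous_map (prod_topology (subtopology (Euclidean_space n) (sphere_set n)) (top_of_set {0..1}))
        (mds_top Y) \<Phi>
   \<and> (\<forall>z\<in>sphere_set n. \<forall>\<phi>\<in>Mrep 1 1. (\<lambda>t. \<Phi> (z, \<phi> t)) \<in> mds_paths Y)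
     \<comment> \<open>underlying set of the pushout\<close>
   \<and> topspace (mds_top Y') = topspace (mds_top Y) \<union> \<Phi> ` (disk n \<times> {0..1})
   \<and> inj_on \<Phi> ((disk n - sphere_set n) \<times> {0<..<1})
   \<and> \<Phi> ` ((disk n - sphere_set n) \<times> {0<..<1}) \<inter> topspace (mds_top Y) = {}
     \<comment> \<open>topology of the pushout (final topology)\<close>
   \<and> (\<forall>A. openin (mds_top Y') A \<longleftrightarrow>
          A \<subseteq> topspace (mds_top Y')
        \<and> openin (mds_top Y) (A \<inter> topspace (mds_top Y))
        \<and> openin (prod_topology (subtopology (Euclidean_space n) (disk n)) (top_of_set {0..1}))
                 {p \<in> disk n \<times> {0..1}. \<Phi> p \<in> A})
     \<comment> \<open>states and execution paths of the pushout\<close>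
   \<and> mds_states Y' = mds_states Y
   \<and> mds_paths Y' = gen_paths (mds_paths Y \<union>
        {(\<lambda>t. \<Phi> (z, \<phi> t)) | z \<phi>. z \<in> disk n \<and> \<phi> \<in> Mrep 1 1})"

definition is_chain_colimit :: "('i::wellorder \<Rightarrow> 'a mdspace) \<Rightarrow> 'i \<Rightarrow> bool" where
  "is_chain_colimit X \<nu> \<longleftrightarrow>
     topspace (mds_top (X \<nu>)) = (\<Union>\<mu>\<in>{\<mu>. \<mu> < \<nu>}. topspace (mds_top (X \<mu>)))
   \<and> (\<forall>A. openin (mds_top (X \<nu>)) A \<longleftrightarrow>
          A \<subseteq> topspace (mds_top (X \<nu>))
        \<and> (\<forall>\<mu><\<nu>. openin (mds_top (X \<mu>)) (A \<inter> topspace (mds_top (X \<mu>)))))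
   \<and> mds_states (X \<nu>) = (\<Union>\<mu>\<in>{\<mu>. \<mu> < \<nu>}. mds_states (X \<mu>))
   \<and> mds_paths (X \<nu>) = gen_paths (\<Union>\<mu>\<in>{\<mu>. \<mu> < \<nu>}. mds_paths (X \<mu>))"

text \<open>The cellular multipointed d-space is X lam.\<close>
definition cellular_tower :: "'a set \<Rightarrow> ('i::wellorder \<Rightarrow> 'a mdspace) \<Rightarrow> 'i \<Rightarrow> bool" where
  "cellular_tower S0 X lam \<longleftrightarrow> (\<forall>\<nu>\<le>lam.
     ((\<forall>\<mu>. \<not> \<mu> < \<nu>) \<longrightarrow>
        mds_top (X \<nu>) = discrete_topology S0 \<and> mds_states (X \<nu>) = S0 \<and> mds_paths (X \<nu>) = {})
   \<and> (\<forall>\<mu>. \<mu> < \<nu> \<and> (\<forall>\<kappa>. \<not> (\<mu> < \<kappa> \<and> \<kappa> < \<nu>)) \<longrightarrow>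
        (\<exists>n \<Phi>. cell_attach (X \<mu>) (X \<nu>) n \<Phi>))
   \<and> ((\<exists>\<mu>. \<mu> < \<nu>) \<and> (\<forall>\<mu><\<nu>. \<exists>\<kappa>. \<mu> < \<kappa> \<and> \<kappa> < \<nu>) \<longrightarrow> is_chain_colimit X \<nu>))"

text \<open>Directed paths of Sp(X): constant paths and Moore compositions
  (gamma_1 phi_1 mu_{l_1}) * ... * (gamma_n phi_n mu_{l_n}), n >= 1, l_i > 0, sum l_i = 1.
  Paths are compared on [0,1].\<close>
definition sp_dpath :: "'a mdspace \<Rightarrow> (real \<Rightarrow> 'a) \<Rightarrow> bool" where
  "sp_dpath X p \<longleftrightarrow>
     (\<exists>x\<in>topspace (mds_top X). \<forall>t\<in>{0..1}. p t = x)
   \<or> (\<exists>L :: (real \<times> (real \<Rightarrow> 'a) \<times> (real \<Rightarrow> real)) list.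
        L \<noteq> []
      \<and> (\<forall>(l, \<gamma>, \<phi>)\<in>set L. l > 0 \<and> \<gamma> \<in> mds_paths X \<and> \<phi> \<in> Irep 1)
      \<and> sum_list (map fst L) = 1
      \<and> moore_composable (map (\<lambda>(l, \<gamma>, \<phi>). (l, \<lambda>t. \<gamma> (\<phi> (t / l)))) L)
      \<and> (\<forall>t\<in>{0..1}. p t = moore (map (\<lambda>(l, \<gamma>, \<phi>). (l, \<lambda>t. \<gamma> (\<phi> (t / l)))) L) t))"

end

theory Submission
  imports Defs
begin

text \<open>Every execution path of a cellular multipointed d-space is, up to a monotone
  reparametrization, a composable word of open cells \<open>t \<mapsto> \<Phi> (z, t)\<close> with \<open>z\<close> interior to an
  attached disk: this holds for the generating paths and survives reparametrization and normalized
  composition. Open cells start and end in states, avoid the states in between, and no two interior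
  points of cells coincide, so two such factorizations meeting at a point run through the same cell
  there and can be spliced. Hence a Moore composition of reparametrized execution paths factors
  through a single word, and a composable word of cells, traversed linearly, is itself an execution
  path.\<close>

section \<open>Words of paths\<close>

fun word_path :: "(real \<Rightarrow> 'a) list \<Rightarrow> real \<Rightarrow> 'a" where
  "word_path [] s = undefined"
| "word_path [e] s = e s"
| "word_path (e # f # w) s = (if s \<le> 1 then e s else word_path (f # w) (s - 1))"

fun word_composable :: "(real \<Rightarrow> 'a) list \<Rightarrow> bool" where
  "word_composable (e # f # w) \<longleftrightarrow> e 1 = f 0 \<and> word_composable (f # w)"
| "word_composable _ \<longleftrightarrow> True"

lemma word_path_Cons:
  "w \<noteq> [] \<Longrightarrow> word_path (e # w) s = (if s \<le> 1 then e s else word_path w (s - 1))"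
  by (cases w) auto

lemma word_path_le_1: "w \<noteq> [] \<Longrightarrow> s \<le> 1 \<Longrightarrow> word_path w s = hd w s"
  by (cases w; cases "tl w") auto

lemma word_path_append:
  assumes "w1 \<noteq> []" "w2 \<noteq> []"
  shows "word_path (w1 @ w2) s =
    (if s \<le> real (length w1) then word_path w1 s else word_path w2 (s - real (length w1)))"
  using assms(1)
proof (induction w1 arbitrary: s)
  case (Cons e w1)
  then show ?case
    using assms(2) by (cases "w1 = []") (auto simp: word_path_Cons algebra_simps)
qed simp

lemma word_path_cell:
  assumes "1 \<le> j" "j \<le> length w" "real j - 1 < s" "s \<le> real j"
  shows "word_path w s = (w ! (j - 1)) (s - real j + 1)"
  using assms
proof (induction w arbitrary: j s)
  case (Cons e w)
  show ?case
  proof (cases "j = 1")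
    case True
    then show ?thesis using Cons.prems by (cases "w = []") (auto simp: word_path_Cons)
  next
    case False
    then obtain i where j: "j = Suc (Suc i)" "i < length w"
      using Cons.prems by (cases j; cases "j - 1") auto
    then have "word_path w (s - 1) = (w ! i) (s - real j + 1)"
      using Cons.IH[of "Suc i" "s - 1"] Cons.prems by auto
    moreover have "w \<noteq> []" "1 < s"
      using j Cons.prems by auto
    ultimately show ?thesis
      using j by (simp add: word_path_Cons)
  qed
qed simp

lemma word_path_nat:
  "1 \<le> j \<Longrightarrow> j \<le> length w \<Longrightarrow> word_path w (real j) = (w ! (j - 1)) 1"
  using word_path_cell[of j w "real j"] by simp

lemma word_composable_iff:
  "word_composable w \<longleftrightarrow> (\<forall>j. Suc j < length w \<longrightarrow> (w ! j) 1 = (w ! Suc j) 0)"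
proof (induction w rule: word_composable.induct)
  case (1 e f w)
  then show ?case by (auto simp: nth_Cons split: nat.splits)
qed auto

lemma word_path_nat_composable:
  assumes "word_composable w" "j < length w"
  shows "word_path w (real j) = (w ! j) 0"
proof (cases j)
  case 0
  then show ?thesis using assms(2) word_path_le_1[of w 0] by (cases w) auto
next
  case (Suc k)
  then show ?thesis using assms word_path_nat[of j w] word_composable_iff[of w] by auto
qed

lemma word_composable_append:
  assumes "w1 \<noteq> []" "w2 \<noteq> []" "word_composable w1" "word_composable w2" "last w1 1 = hd w2 0"
  shows "word_composable (w1 @ w2)"
  using assms
proof (induction w1 rule: word_composable.induct)
  case ("2_2" e)
  then show ?case by (cases w2) auto
qed auto

lemma word_path_take_append:
  assumes "1 \<le> j" "j \<le> length w" "s \<le> real j"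
  shows "word_path (take j w @ r) s = word_path w s"
proof -
  have take: "take j w \<noteq> []" using assms by auto
  have "word_path (take j w @ r) s = word_path (take j w) s"
    using word_path_append[OF take, of r s] assms by (cases "r = []") auto
  also have "\<dots> = word_path (take j w @ drop j w) s"
    using word_path_append[OF take, of "drop j w" s] assms by (cases "drop j w = []") auto
  finally show ?thesis by simp
qed

lemma word_path_take_append_gt:
  assumes "1 \<le> j" "j \<le> length w" "r \<noteq> []" "real j < s"
  shows "word_path (take j w @ r) s = word_path r (s - real j)"
  using word_path_append[of "take j w" r s] assms by (cases w) auto

lemma word_path_drop:
  assumes "j < length w" "0 < s"
  shows "word_path (drop j w) s = word_path w (s + real j)"
proof (cases "j = 0")
  case False
  then have "word_path (take j w @ drop j w) (s + real j) = word_path (drop j w) s"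
    using word_path_take_append_gt[of j w "drop j w" "s + real j"] assms by auto
  then show ?thesis by simp
qed simp

lemma word_splice:
  assumes comp: "word_composable w1" "word_composable w2"
    and j: "1 \<le> j1" "j1 \<le> length w1" "j2 \<le> length w2"
    and match: "word_path w1 (real j1) = word_path w2 (real j2)"
  defines "w \<equiv> take j1 w1 @ drop j2 w2"
  shows "w \<noteq> []" "word_composable w" "set w \<subseteq> set w1 \<union> set w2"
    and "real (length w) = real j1 + real (length w2) - real j2"
    and "s \<le> real j1 \<Longrightarrow> word_path w s = word_path w1 s"
    and "real j2 < s \<Longrightarrow> s \<le> real (length w2) \<Longrightarrow>
      word_path w (s + real j1 - real j2) = word_path w2 s"
proof -
  have take: "take j1 w1 \<noteq> []" using j by auto
  then show "w \<noteq> []" unfolding w_def by simp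
  show "set w \<subseteq> set w1 \<union> set w2"
    unfolding w_def using set_take_subset set_drop_subset by fastforce
  show "real (length w) = real j1 + real (length w2) - real j2"
    unfolding w_def using j by auto
  show "word_composable w"
  proof (cases "drop j2 w2 = []")
    case True
    then show ?thesis
      unfolding w_def using comp(1) by (simp add: word_composable_iff)
  next
    case False
    then have j2: "j2 < length w2" by simp
    have "last (take j1 w1) 1 = word_path w1 (real j1)"
      using take j word_path_nat[of j1 w1] by (simp add: last_conv_nth min_def)
    also have "\<dots> = hd (drop j2 w2) 0"
      using match word_path_nat_composable[OF comp(2) j2] j2 by (simp add: hd_drop_conv_nth)
    finally show ?thesis
      unfolding w_def using comp False take
      by (intro word_composable_append) (auto simp: word_composable_iff)
  qed
  show "s \<le> real j1 \<Longrightarrow> word_path w s = word_path w1 s"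
    unfolding w_def using word_path_take_append j by blast
  assume s: "real j2 < s" "s \<le> real (length w2)"
  then have j2: "j2 < length w2" by linarith
  then have "word_path w (s + real j1 - real j2) = word_path (drop j2 w2) (s - real j2)"
    unfolding w_def using word_path_take_append_gt[of j1 w1 "drop j2 w2"] j s by simp
  also have "\<dots> = word_path w2 s"
    using word_path_drop[OF j2] s by simp
  finally show "word_path w (s + real j1 - real j2) = word_path w2 s" .
qed

lemma moore_singleton [simp]: "moore [(l, f)] = f"
  by (simp add: fun_eq_iff)

section \<open>Reparametrizations\<close>

lemma MrepI:
  assumes "continuous_on {0..1} f" "mono_on {0..1} f" "f 0 = 0" "f 1 = m"
  shows "f \<in> Mrep 1 m"
proof -
  have "f ` {0..1} \<subseteq> {0..m}"
    using mono_onD[OF assms(2), of 0] mono_onD[OF assms(2), of _ 1] assms(3,4) by auto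
  moreover have "{0..m} \<subseteq> f ` {0..1}"
  proof
    fix y assume "y \<in> {0..m}"
    then obtain t where "0 \<le> t" "t \<le> 1" "f t = y"
      using IVT'[of f 0 y 1] assms by auto
    then show "y \<in> f ` {0..1}" by auto
  qed
  ultimately show ?thesis
    unfolding Mrep_def using assms by auto
qed

lemma continuous_on_paste:
  fixes f g :: "real \<Rightarrow> real"
  assumes "continuous_on {0..a} f" "continuous_on {0..b} g" "f a = g 0" "0 \<le> a"
  shows "continuous_on {0..a + b} (\<lambda>t. if t \<le> a then f t else g (t - a))"
proof (rule continuous_on_cases_le[where h = "\<lambda>t. t"])
  show "continuous_on {t \<in> {0..a + b}. t \<le> a} f"
    by (rule continuous_on_subset[OF assms(1)]) auto
  show "continuous_on {t \<in> {0..a + b}. a \<le> t} (\<lambda>t. g (t - a))"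
    by (rule continuous_on_compose2[OF assms(2)]) (auto intro!: continuous_intros)
qed (auto intro: continuous_intros simp: assms)

lemma mono_on_paste:
  fixes f g :: "real \<Rightarrow> real"
  assumes "mono_on {0..a} f" "mono_on {0..b} g" "f a \<le> g 0" "0 \<le> a"
  shows "mono_on {0..a + b} (\<lambda>t. if t \<le> a then f t else g (t - a))"
proof (rule mono_onI)
  fix r s assume rs: "r \<in> {0..a + b}" "s \<in> {0..a + b}" "r \<le> s"
  have "f r \<le> g (s - a)" if "r \<le> a" "\<not> s \<le> a"
    using mono_onD[OF assms(1), of r a] mono_onD[OF assms(2), of 0 "s - a"] that rs assms(3)
    by auto
  then show "(if r \<le> a then f r else g (r - a)) \<le> (if s \<le> a then f s else g (s - a))"
    using rs by (auto intro: mono_onD[OF assms(1)] mono_onD[OF assms(2)])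
qed

lemma norm_comp_eq: "norm_comp g1 g2 t = (if t \<le> 1/2 then g1 (2 * t) else g2 (2 * t - 1))"
proof -
  have "t / (1/2) = 2 * t" "(t - 1/2) / (1/2) = 2 * t - 1"
    by (simp_all add: field_simps)
  then show ?thesis unfolding norm_comp_def by (simp add: mult.commute)
qed

lemma norm_comp_reparam:
  assumes a: "0 < a" "a < 1"
  obtains \<phi> where "\<phi> \<in> Mrep 1 1"
    and "\<And>t. t \<in> {0..1} \<Longrightarrow>
      norm_comp g1 g2 (\<phi> t) = (if t \<le> a then g1 (t / a) else g2 ((t - a) / (1 - a)))"
proof
  define \<phi> where "\<phi> t = (if t \<le> a then t / (2 * a) else 1/2 + (t - a) / (2 * (1 - a)))" for t
  have \<phi>_paste: "\<phi> = (\<lambda>t. if t \<le> a then t / (2 * a) else (\<lambda>u. 1/2 + u / (2 * (1 - a))) (t - a))"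
    by (simp add: \<phi>_def fun_eq_iff)
  have "continuous_on {0..a + (1 - a)} \<phi>"
    unfolding \<phi>_paste using a by (intro continuous_on_paste continuous_intros) auto
  moreover have "mono_on {0..a + (1 - a)} \<phi>"
    unfolding \<phi>_paste using a
    by (intro mono_on_paste mono_onI) (auto simp: divide_right_mono)
  ultimately show "\<phi> \<in> Mrep 1 1"
    by (intro MrepI) (use a in \<open>auto simp: \<phi>_def field_simps\<close>)
  fix t :: real assume "t \<in> {0..1}"
  have "\<phi> t \<le> 1/2 \<longleftrightarrow> t \<le> a"
    using a by (auto simp: \<phi>_def field_simps)
  moreover have "2 * \<phi> t = t / a" if "t \<le> a"
    using that a by (simp add: \<phi>_def)
  moreover have "2 * \<phi> t - 1 = (t - a) / (1 - a)" if "\<not> t \<le> a"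
    using that a by (simp add: \<phi>_def field_simps)
  ultimately show "norm_comp g1 g2 (\<phi> t) = (if t \<le> a then g1 (t / a) else g2 ((t - a) / (1 - a)))"
    by (simp add: norm_comp_eq)
qed

lemma word_path_Cons_scaled:
  fixes t :: real
  assumes "w \<noteq> []" "t \<in> {0..1}"
  defines "a \<equiv> 1 / (real (length w) + 1)"
  shows "word_path (e # w) (real (length (e # w)) * t) =
      (if t \<le> a then e (t / a) else word_path w (real (length w) * ((t - a) / (1 - a))))"
    and "\<not> t \<le> a \<Longrightarrow> (t - a) / (1 - a) \<in> {0..1}"
proof -
  define M where "M = real (length w)"
  have M: "1 \<le> M" using assms(1) by (cases w) (auto simp: M_def)
  have a_M: "a = 1 / (M + 1)"
    by (simp add: a_def M_def)
  have "(t - a) / (1 - a) = (((M + 1) * t - 1) / (M + 1)) / (M / (M + 1))"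
    using M by (simp add: a_M field_simps)
  then have scaled: "(t - a) / (1 - a) = ((M + 1) * t - 1) / M"
    using M by simp
  have t_le: "t \<le> a \<longleftrightarrow> (M + 1) * t \<le> 1"
    using M by (simp add: a_M field_simps)
  have "real (length w) * ((t - a) / (1 - a)) = (M + 1) * t - 1"
    unfolding scaled M_def[symmetric] using M by simp
  moreover have "real (length (e # w)) = M + 1" "t / a = (M + 1) * t"
    by (simp_all add: M_def a_M)
  ultimately show "word_path (e # w) (real (length (e # w)) * t) =
      (if t \<le> a then e (t / a) else word_path w (real (length w) * ((t - a) / (1 - a))))"
    using assms(1) t_le by (simp add: word_path_Cons add.commute)
  show "(t - a) / (1 - a) \<in> {0..1}" if "\<not> t \<le> a"
  proof -
    have "(M + 1) * t \<le> M + 1"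
      using assms(2) M by (simp add: mult_left_le)
    then show ?thesis
      unfolding scaled using that t_le M by (auto simp: field_simps)
  qed
qed

lemma word_path_in_gen_paths:
  assumes "w \<noteq> []" "word_composable w" "set w \<subseteq> gen_paths Q"
  shows "\<exists>\<gamma>\<in>gen_paths Q. \<forall>t\<in>{0..1}. \<gamma> t = word_path w (real (length w) * t)"
  using assms
proof (induction w)
  case (Cons e w)
  show ?case
  proof (cases "w = []")
    case True
    then show ?thesis using Cons.prems by auto
  next
    case False
    obtain \<gamma> where \<gamma>: "\<gamma> \<in> gen_paths Q"
      and \<gamma>_eq: "\<forall>t\<in>{0..1}. \<gamma> t = word_path w (real (length w) * t)"
      using Cons False by (cases w) auto
    define a where "a = 1 / (real (length w) + 1)"
    have a: "0 < a" "a < 1" using False by (auto simp: a_def)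
    obtain \<phi> where \<phi>: "\<phi> \<in> Mrep 1 1" and comp: "\<And>t. t \<in> {0..1} \<Longrightarrow>
        norm_comp e \<gamma> (\<phi> t) = (if t \<le> a then e (t / a) else \<gamma> ((t - a) / (1 - a)))"
      using norm_comp_reparam[OF a] by blast
    have "e 1 = \<gamma> 0"
      using Cons.prems False \<gamma>_eq word_path_le_1[OF False, of 0] by (cases w) auto
    then have "norm_comp e \<gamma> \<circ> \<phi> \<in> gen_paths Q"
      using Cons.prems \<gamma> \<phi> by (auto intro: gen_paths.comp gen_paths.reparam)
    moreover have "(norm_comp e \<gamma> \<circ> \<phi>) t = word_path (e # w) (real (length (e # w)) * t)"
      if "t \<in> {0..1}" for t
      using comp[OF that] \<gamma>_eq word_path_Cons_scaled(1)[OF False that, of e, folded a_def]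
        word_path_Cons_scaled(2)[OF False that, folded a_def] by auto
    ultimately show ?thesis by blast
  qed
qed simp

section \<open>Paths factoring through words of cells\<close>

lemma real_nat_or_between:
  fixes s :: real
  assumes "0 \<le> s" "s \<le> real m"
  obtains (nat) k where "k \<le> m" "s = real k"
    | (between) j where "1 \<le> j" "j \<le> m" "real j - 1 < s" "s < real j"
proof -
  define j where "j = nat \<lceil>s\<rceil>"
  have j: "real j = of_int \<lceil>s\<rceil>" "j \<le> m"
    unfolding j_def using assms by (auto simp: ceiling_le_iff nat_le_iff)
  have ceiling: "of_int \<lceil>s\<rceil> - 1 < s" "s \<le> of_int \<lceil>s\<rceil>"
    by linarith+
  show ?thesis
  proof (cases "s = real j")
    case True
    then show ?thesis using j nat by blast
  next
    case False
    then have "real j - 1 < s" "s < real j" "1 \<le> j"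
      using j(1) ceiling assms(1) by (linarith, linarith, cases "j = 0") auto
    then show ?thesis using j between by blast
  qed
qed

definition factors_through_word :: "(real \<Rightarrow> 'a) set \<Rightarrow> real \<Rightarrow> (real \<Rightarrow> 'a) \<Rightarrow> bool" where
  "factors_through_word E l f \<longleftrightarrow> (\<exists>w \<theta>. w \<noteq> [] \<and> word_composable w \<and> set w \<subseteq> E
     \<and> continuous_on {0..l} \<theta> \<and> mono_on {0..l} \<theta> \<and> \<theta> ` {0..l} \<subseteq> {0..real (length w)}
     \<and> (\<forall>t\<in>{0..l}. f t = word_path w (\<theta> t)))"

lemma factors_through_wordE:
  assumes "factors_through_word E l f"
  obtains w \<theta> where "w \<noteq> []" "word_composable w" "set w \<subseteq> E"
    "continuous_on {0..l} \<theta>" "mono_on {0..l} \<theta>" "\<theta> ` {0..l} \<subseteq> {0..real (length w)}"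
    "\<forall>t\<in>{0..l}. f t = word_path w (\<theta> t)"
  using assms that unfolding factors_through_word_def by metis

lemma factors_through_word_cong:
  "factors_through_word E l f \<Longrightarrow> (\<And>t. t \<in> {0..l} \<Longrightarrow> g t = f t) \<Longrightarrow> factors_through_word E l g"
  unfolding factors_through_word_def by auto

lemma factors_through_word_cell: "e \<in> E \<Longrightarrow> factors_through_word E 1 e"
  unfolding factors_through_word_def
  by (intro exI[of _ "[e]"] exI[of _ "\<lambda>t. t"]) (auto intro: continuous_on_id mono_onI)

lemma factors_through_word_compose:
  assumes f: "factors_through_word E l f"
    and \<psi>: "continuous_on {0..l'} \<psi>" "mono_on {0..l'} \<psi>" "\<psi> ` {0..l'} \<subseteq> {0..l}"
  shows "factors_through_word E l' (f \<circ> \<psi>)"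
proof -
  obtain w \<theta> where w: "w \<noteq> []" "word_composable w" "set w \<subseteq> E"
    and \<theta>: "continuous_on {0..l} \<theta>" "mono_on {0..l} \<theta>" "\<theta> ` {0..l} \<subseteq> {0..real (length w)}"
    and f_eq: "\<forall>t\<in>{0..l}. f t = word_path w (\<theta> t)"
    using f by (rule factors_through_wordE)
  have "continuous_on {0..l'} (\<theta> \<circ> \<psi>)"
    using continuous_on_compose[OF \<psi>(1)] continuous_on_subset[OF \<theta>(1) \<psi>(3)] by blast
  moreover have "mono_on {0..l'} (\<theta> \<circ> \<psi>)"
    using \<psi>(3) by (intro mono_onI) (auto intro!: mono_onD[OF \<theta>(2)] mono_onD[OF \<psi>(2)])
  moreover have "(\<theta> \<circ> \<psi>) ` {0..l'} \<subseteq> {0..real (length w)}"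
    using \<theta>(3) \<psi>(3) by (auto simp: image_comp[symmetric])
  moreover have "\<forall>t\<in>{0..l'}. (f \<circ> \<psi>) t = word_path w ((\<theta> \<circ> \<psi>) t)"
    using f_eq \<psi>(3) by auto
  ultimately show ?thesis
    unfolding factors_through_word_def using w by blast
qed

lemma factors_through_word_piece:
  assumes "factors_through_word E 1 \<gamma>" "\<phi> \<in> Irep 1" "0 < l"
  shows "factors_through_word E l (\<lambda>t. \<gamma> (\<phi> (t / l)))"
proof -
  have \<phi>: "continuous_on {0..1} \<phi>" "mono_on {0..1} \<phi>" "\<phi> ` {0..1} \<subseteq> {0..1}"
    using assms(2) unfolding Irep_def by auto
  have scale: "(\<lambda>t. t / l) ` {0..l} \<subseteq> {0..1}"
    using assms(3) by auto
  have "continuous_on {0..l} (\<lambda>t. \<phi> (t / l))"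
    using scale assms(3) by (intro continuous_on_compose2[OF \<phi>(1)] continuous_intros) auto
  moreover have "mono_on {0..l} (\<lambda>t. \<phi> (t / l))"
  proof (rule mono_onI)
    fix r s assume "r \<in> {0..l}" "s \<in> {0..l}" "r \<le> s"
    then show "\<phi> (r / l) \<le> \<phi> (s / l)"
      using scale assms(3) by (intro mono_onD[OF \<phi>(2)]) (auto simp: divide_right_mono)
  qed
  moreover have "(\<lambda>t. \<phi> (t / l)) ` {0..l} \<subseteq> {0..1}"
    using scale \<phi>(3) by auto
  ultimately show ?thesis
    using factors_through_word_compose[OF assms(1)] by (simp add: comp_def)
qed

lemma factors_through_word_imp_reparametrized_path:
  assumes "factors_through_word E 1 f" "E \<subseteq> gen_paths Q"
  shows "\<exists>\<gamma>\<in>gen_paths Q. \<exists>\<phi>\<in>Irep 1. \<forall>t\<in>{0..1}. f t = \<gamma> (\<phi> t)"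
proof -
  obtain w \<theta> where w: "w \<noteq> []" "word_composable w" "set w \<subseteq> E"
    and \<theta>: "continuous_on {0..1} \<theta>" "mono_on {0..1} \<theta>" "\<theta> ` {0..1} \<subseteq> {0..real (length w)}"
    and f_eq: "\<forall>t\<in>{0..1}. f t = word_path w (\<theta> t)"
    using assms(1) by (rule factors_through_wordE)
  obtain \<gamma> where \<gamma>: "\<gamma> \<in> gen_paths Q"
    and \<gamma>_eq: "\<forall>t\<in>{0..1}. \<gamma> t = word_path w (real (length w) * t)"
    using word_path_in_gen_paths[OF w(1,2)] w(3) assms(2) by blast
  define m where "m = real (length w)"
  have m: "0 < m" using w(1) by (simp add: m_def)
  have "(\<lambda>t. \<theta> t / m) \<in> Irep 1"
    unfolding Irep_def using \<theta> m
    by (auto intro!: continuous_intros mono_onI divide_right_mono dest: mono_onD simp: m_def)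
  moreover have "f t = \<gamma> (\<theta> t / m)" if "t \<in> {0..1}" for t
  proof -
    have "\<theta> t \<in> {0..m}"
      using \<theta>(3) that unfolding m_def by blast
    then have "\<theta> t / m \<in> {0..1}"
      using m by auto
    then show ?thesis
      using f_eq that \<gamma>_eq m by (simp add: m_def)
  qed
  ultimately show ?thesis
    using \<gamma> by (intro bexI[of _ \<gamma>] bexI[of _ "\<lambda>t. \<theta> t / m"]) auto
qed

lemma factors_through_word_splice_const:
  assumes "0 \<le> l" "0 \<le> L" "factors_through_word E L g" "\<And>t. t \<in> {0..l} \<Longrightarrow> f t = g 0"
  shows "factors_through_word E (l + L) (\<lambda>t. if t \<le> l then f t else g (t - l))"
proof -
  define \<psi> where "\<psi> t = max 0 (t - l)" for t
  have "factors_through_word E (l + L) (g \<circ> \<psi>)"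
  proof (rule factors_through_word_compose[OF assms(3)])
    show "continuous_on {0..l + L} \<psi>"
      unfolding \<psi>_def by (intro continuous_intros)
    show "mono_on {0..l + L} \<psi>"
      unfolding \<psi>_def by (intro mono_onI) auto
    show "\<psi> ` {0..l + L} \<subseteq> {0..L}"
      unfolding \<psi>_def using assms(1,2) by auto
  qed
  then show ?thesis
    by (rule factors_through_word_cong) (use assms(4) in \<open>auto simp: \<psi>_def\<close>)
qed

lemma factors_through_word_splice_common:
  assumes w: "w \<noteq> []" "word_composable w" "set w \<subseteq> E" and "0 \<le> l"
    and \<theta>1: "continuous_on {0..l} \<theta>1" "mono_on {0..l} \<theta>1" "\<theta>1 ` {0..l} \<subseteq> {0..real (length w)}"
    and \<theta>2: "continuous_on {0..L} \<theta>2" "mono_on {0..L} \<theta>2" "\<theta>2 ` {0..L} \<subseteq> {0..real (length w)}"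
    and "\<theta>1 l = \<theta>2 0"
    and "\<forall>t\<in>{0..l}. f t = word_path w (\<theta>1 t)" "\<forall>u\<in>{0..L}. g u = word_path w (\<theta>2 u)"
  shows "factors_through_word E (l + L) (\<lambda>t. if t \<le> l then f t else g (t - l))"
  unfolding factors_through_word_def
proof (intro exI conjI)
  let ?\<theta> = "\<lambda>t. if t \<le> l then \<theta>1 t else \<theta>2 (t - l)"
  show "continuous_on {0..l + L} ?\<theta>" "mono_on {0..l + L} ?\<theta>"
    using assms by (auto intro: continuous_on_paste mono_on_paste)
  show "?\<theta> ` {0..l + L} \<subseteq> {0..real (length w)}"
    using \<theta>1(3) \<theta>2(3) by (force simp: image_subset_iff)
  show "\<forall>t\<in>{0..l + L}. (if t \<le> l then f t else g (t - l)) = word_path w (?\<theta> t)"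
    using assms by auto
qed (use w in auto)

locale cell_family =
  fixes S :: "'a set" and E :: "(real \<Rightarrow> 'a) set"
  assumes cell_start: "e \<in> E \<Longrightarrow> e 0 \<in> S"
    and cell_end: "e \<in> E \<Longrightarrow> e 1 \<in> S"
    and cell_interior_notin: "e \<in> E \<Longrightarrow> 0 < s \<Longrightarrow> s < 1 \<Longrightarrow> e s \<notin> S"
    and cell_interior_inj: "e \<in> E \<Longrightarrow> e' \<in> E \<Longrightarrow> 0 < s \<Longrightarrow> s < 1 \<Longrightarrow> 0 < s' \<Longrightarrow> s' < 1 \<Longrightarrow>
      e s = e' s' \<Longrightarrow> e = e' \<and> s = s'"
begin

lemma word_path_cases:
  assumes w: "w \<noteq> []" "set w \<subseteq> E" and s: "0 \<le> s" "s \<le> real (length w)"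
  obtains (vertex) k where "k \<le> length w" "s = real k" "word_path w s \<in> S"
  | (interior) j where "1 \<le> j" "j \<le> length w" "real j - 1 < s" "s < real j" "w ! (j - 1) \<in> E"
      "word_path w s = (w ! (j - 1)) (s - real j + 1)" "word_path w s \<notin> S"
  using s
proof (cases rule: real_nat_or_between)
  case (nat k)
  have "word_path w (real k) \<in> S"
  proof (cases k)
    case 0
    then show ?thesis
      using w word_path_le_1[OF w(1), of 0] cell_start by (simp add: hd_in_set subset_iff)
  next
    case (Suc i)
    then show ?thesis
      using w nat(1) word_path_nat[of k w] cell_end by (simp add: subset_iff)
  qed
  then show ?thesis using nat vertex by simp
next
  case (between j)
  then have "w ! (j - 1) \<in> E"
    using w(2) by (auto intro: nth_mem)
  moreover have "word_path w s = (w ! (j - 1)) (s - real j + 1)"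
    using between by (intro word_path_cell) auto
  moreover have "(w ! (j - 1)) (s - real j + 1) \<notin> S"
    using between by (intro cell_interior_notin[OF calculation(1)]) auto
  ultimately show ?thesis
    using between interior by simp
qed

lemma word_junction:
  assumes w1: "w1 \<noteq> []" "set w1 \<subseteq> E" and w2: "w2 \<noteq> []" "set w2 \<subseteq> E"
    and s1: "0 < s1" "s1 \<le> real (length w1)" and s2: "0 \<le> s2" "s2 \<le> real (length w2)"
    and eq: "word_path w1 s1 = word_path w2 s2"
  obtains j1 j2 where "1 \<le> j1" "j1 \<le> length w1" "j2 \<le> length w2"
    "s1 \<le> real j1" "s1 - real j1 = s2 - real j2"
    "\<And>s. s2 \<le> s \<Longrightarrow> s \<le> real j2 \<Longrightarrow> word_path w1 (s + real j1 - real j2) = word_path w2 s"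
  using w1 less_imp_le[OF s1(1)] s1(2)
proof (cases rule: word_path_cases)
  case (vertex k1)
  show ?thesis
    using w2 s2
  proof (cases rule: word_path_cases)
    case (vertex k2)
    have "1 \<le> k1" using \<open>s1 = real k1\<close> s1(1) by simp
    then show ?thesis
      using that[of k1 k2] \<open>k1 \<le> length w1\<close> \<open>s1 = real k1\<close> vertex eq by auto
  next
    case interior
    then show ?thesis using vertex eq by simp
  qed
next
  case (interior j1)
  note cell1 = interior
  show ?thesis
    using w2 s2
  proof (cases rule: word_path_cases)
    case vertex
    then show ?thesis using cell1 eq by simp
  next
    case (interior j2)
    have same: "w1 ! (j1 - 1) = w2 ! (j2 - 1)" "s1 - real j1 = s2 - real j2"
      using cell_interior_inj[of "w1 ! (j1 - 1)" "w2 ! (j2 - 1)" "s1 - real j1 + 1" "s2 - real j2 + 1"]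
        cell1 interior eq by auto
    have "word_path w1 (s + real j1 - real j2) = word_path w2 s"
      if "s2 \<le> s" "s \<le> real j2" for s
    proof -
      have "word_path w2 s = (w2 ! (j2 - 1)) (s - real j2 + 1)"
        using interior that by (intro word_path_cell) auto
      moreover have "word_path w1 (s + real j1 - real j2) = (w1 ! (j1 - 1)) (s - real j2 + 1)"
        using cell1 interior that same(2) by (subst word_path_cell[of j1]) auto
      ultimately show ?thesis using same(1) by simp
    qed
    then show ?thesis
      using that[of j1 j2] cell1 interior same(2) by auto
  qed
qed

lemma cell_words_merge:
  assumes w1: "w1 \<noteq> []" "word_composable w1" "set w1 \<subseteq> E"
    and w2: "w2 \<noteq> []" "word_composable w2" "set w2 \<subseteq> E"
    and s1: "0 < s1" "s1 \<le> real (length w1)" and s2: "0 \<le> s2" "s2 \<le> real (length w2)"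
    and eq: "word_path w1 s1 = word_path w2 s2"
  obtains w d where "w \<noteq> []" "word_composable w" "set w \<subseteq> E"
    "s1 = s2 + d" "real (length w) = real (length w2) + d"
    "\<And>s. s \<le> s1 \<Longrightarrow> word_path w s = word_path w1 s"
    "\<And>s. s2 \<le> s \<Longrightarrow> s \<le> real (length w2) \<Longrightarrow> word_path w (s + d) = word_path w2 s"
proof -
  obtain j1 j2 where j: "1 \<le> j1" "j1 \<le> length w1" "j2 \<le> length w2"
    and s1_le: "s1 \<le> real j1" and shift: "s1 - real j1 = s2 - real j2"
    and agree: "\<And>s. s2 \<le> s \<Longrightarrow> s \<le> real j2 \<Longrightarrow> word_path w1 (s + real j1 - real j2) = word_path w2 s"
    using word_junction[OF w1(1,3) w2(1,3) s1 s2 eq] by blast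
  have "word_path w1 (real j1) = word_path w2 (real j2)"
    using agree[of "real j2"] s1_le shift by simp
  note w = word_splice[OF w1(2) w2(2) j this]
  have "word_path (take j1 w1 @ drop j2 w2) (s + (real j1 - real j2)) = word_path w2 s"
    if "s2 \<le> s" "s \<le> real (length w2)" for s
  proof (cases "s \<le> real j2")
    case True
    then show ?thesis
      using w(5)[of "s + real j1 - real j2"] agree that by (simp add: algebra_simps)
  next
    case False
    then show ?thesis using w(6) that by (simp add: algebra_simps)
  qed
  moreover have "set (take j1 w1 @ drop j2 w2) \<subseteq> E"
    using w(3) w1(3) w2(3) by blast
  ultimately show ?thesis
    using that[of "take j1 w1 @ drop j2 w2" "real j1 - real j2"] w(1,2,4,5) s1_le shift by auto
qed

lemma factors_through_word_splice:
  assumes l: "0 < l" "0 < L"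
    and f: "factors_through_word E l f" and g: "factors_through_word E L g" and fg: "f l = g 0"
  shows "factors_through_word E (l + L) (\<lambda>t. if t \<le> l then f t else g (t - l))"
proof -
  obtain w1 \<theta>1 where w1: "w1 \<noteq> []" "word_composable w1" "set w1 \<subseteq> E"
    and \<theta>1: "continuous_on {0..l} \<theta>1" "mono_on {0..l} \<theta>1" "\<theta>1 ` {0..l} \<subseteq> {0..real (length w1)}"
    and f_eq: "\<forall>t\<in>{0..l}. f t = word_path w1 (\<theta>1 t)"
    using f by (rule factors_through_wordE)
  obtain w2 \<theta>2 where w2: "w2 \<noteq> []" "word_composable w2" "set w2 \<subseteq> E"
    and \<theta>2: "continuous_on {0..L} \<theta>2" "mono_on {0..L} \<theta>2" "\<theta>2 ` {0..L} \<subseteq> {0..real (length w2)}"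
    and g_eq: "\<forall>t\<in>{0..L}. g t = word_path w2 (\<theta>2 t)"
    using g by (rule factors_through_wordE)
  have \<theta>1_bounds: "0 \<le> \<theta>1 t \<and> \<theta>1 t \<le> \<theta>1 l" if "t \<in> {0..l}" for t
    using \<theta>1(3) that mono_onD[OF \<theta>1(2) that, of l] l by (auto simp: image_subset_iff)
  have \<theta>2_bounds: "\<theta>2 0 \<le> \<theta>2 u \<and> \<theta>2 u \<le> real (length w2)" if "u \<in> {0..L}" for u
    using \<theta>2(3) that mono_onD[OF \<theta>2(2), of 0 u] l by (auto simp: image_subset_iff)
  show ?thesis
  proof (cases "\<theta>1 l = 0")
    case True
    have "f t = g 0" if "t \<in> {0..l}" for t
      using f_eq that \<theta>1_bounds[OF that] True fg l by auto
    then show ?thesis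
      using l by (intro factors_through_word_splice_const[OF _ _ g]) auto
  next
    case False
    then have pos: "0 < \<theta>1 l" using \<theta>1_bounds[of l] l by auto
    have ends: "\<theta>1 l \<le> real (length w1)" "0 \<le> \<theta>2 0" "\<theta>2 0 \<le> real (length w2)"
      using \<theta>1(3) \<theta>2(3) l by (auto simp: image_subset_iff)
    have joint: "word_path w1 (\<theta>1 l) = word_path w2 (\<theta>2 0)"
      using f_eq g_eq fg l by auto
    obtain w d where w: "w \<noteq> []" "word_composable w" "set w \<subseteq> E"
      and shift: "\<theta>1 l = \<theta>2 0 + d" "real (length w) = real (length w2) + d"
      and w_w1: "\<And>s. s \<le> \<theta>1 l \<Longrightarrow> word_path w s = word_path w1 s"
      and w_w2: "\<And>s. \<theta>2 0 \<le> s \<Longrightarrow> s \<le> real (length w2) \<Longrightarrow> word_path w (s + d) = word_path w2 s"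
      using cell_words_merge[OF w1 w2 pos ends joint] by blast
    show ?thesis
    proof (rule factors_through_word_splice_common[OF w _ \<theta>1(1,2)])
      show "\<theta>1 ` {0..l} \<subseteq> {0..real (length w)}"
        using \<theta>1_bounds \<theta>2_bounds[of 0] shift l by fastforce
      show "\<forall>t\<in>{0..l}. f t = word_path w (\<theta>1 t)"
        using f_eq \<theta>1_bounds w_w1 by force
      show "continuous_on {0..L} (\<lambda>u. \<theta>2 u + d)"
        using \<theta>2(1) by (intro continuous_intros)
      show "mono_on {0..L} (\<lambda>u. \<theta>2 u + d)"
        by (intro mono_onI) (auto intro: mono_onD[OF \<theta>2(2)])
      show "(\<lambda>u. \<theta>2 u + d) ` {0..L} \<subseteq> {0..real (length w)}"
        using \<theta>2_bounds \<theta>1_bounds[of l] shift l by fastforce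
      show "\<forall>u\<in>{0..L}. g u = word_path w (\<theta>2 u + d)"
        using g_eq \<theta>2_bounds w_w2 by auto
    qed (use l shift in auto)
  qed
qed

lemma factors_through_word_moore:
  assumes "M \<noteq> []" "moore_composable M" "\<forall>(l, f)\<in>set M. 0 < l \<and> factors_through_word E l f"
  shows "factors_through_word E (sum_list (map fst M)) (moore M)"
  using assms
proof (induction M rule: moore_composable.induct)
  case (1 l f l' g rest)
  have "0 \<le> sum_list (map fst rest)"
    using 1(4) by (force intro: sum_list_nonneg)
  then have "0 < l' + sum_list (map fst rest)"
    using 1(4) by auto
  moreover have "factors_through_word E (l' + sum_list (map fst rest)) (moore ((l', g) # rest))"
    using 1 by simp
  moreover have "moore ((l', g) # rest) 0 = g 0"
    using 1(4) by (cases rest) auto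
  ultimately have "factors_through_word E (l + (l' + sum_list (map fst rest)))
      (\<lambda>t. if t \<le> l then f t else moore ((l', g) # rest) (t - l))"
    using 1(3,4) by (intro factors_through_word_splice) auto
  then show ?case by simp
qed auto

lemma gen_paths_factor_through_word:
  assumes "\<gamma> \<in> gen_paths Q" "\<And>q. q \<in> Q \<Longrightarrow> factors_through_word E 1 q"
  shows "factors_through_word E 1 \<gamma>"
  using assms(1)
proof (induction rule: gen_paths.induct)
  case (base \<gamma>)
  then show ?case by (rule assms(2))
next
  case (reparam \<gamma> \<phi>)
  then show ?case
    by (intro factors_through_word_compose) (auto simp: Mrep_def)
next
  case (comp \<gamma>1 \<gamma>2)
  have id: "(\<lambda>t. t) \<in> Irep 1"
    unfolding Irep_def by (auto intro: continuous_on_id mono_onI)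
  let ?M = "[(1/2, \<lambda>t. \<gamma>1 (t / (1/2))), (1/2, \<lambda>t. \<gamma>2 (t / (1/2)))]"
  have "factors_through_word E (1/2) (\<lambda>t. \<gamma>1 (t / (1/2)))" "factors_through_word E (1/2) (\<lambda>t. \<gamma>2 (t / (1/2)))"
    using factors_through_word_piece[OF comp.IH(1) id, of "1/2"]
      factors_through_word_piece[OF comp.IH(2) id, of "1/2"]
    by auto
  then have "factors_through_word E (sum_list (map fst ?M)) (moore ?M)"
    using comp by (intro factors_through_word_moore) auto
  then show ?case
    unfolding norm_comp_def by (simp del: moore.simps)
next
  case (ext \<gamma> \<delta>)
  then show ?case by (auto intro: factors_through_word_cong)
qed

end

section \<open>Cellular towers\<close>

definition immediate_pred :: "'i::wellorder \<Rightarrow> 'i \<Rightarrow> bool" where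
  "immediate_pred \<mu> \<nu> \<longleftrightarrow> \<mu> < \<nu> \<and> (\<forall>\<kappa>. \<not> (\<mu> < \<kappa> \<and> \<kappa> < \<nu>))"

lemma immediate_pred_le: "immediate_pred \<mu> \<nu> \<Longrightarrow> \<kappa> < \<nu> \<Longrightarrow> \<kappa> \<le> \<mu>"
  unfolding immediate_pred_def using not_le by blast

lemma immediate_pred_unique: "immediate_pred \<mu> \<nu> \<Longrightarrow> immediate_pred \<mu>' \<nu> \<Longrightarrow> \<mu> = \<mu>'"
  by (meson antisym immediate_pred_le immediate_pred_def)

lemma bounded_transfinite_induct [consumes 1, case_names zero succ limit]:
  fixes \<nu> :: "'i::wellorder"
  assumes "\<nu> \<le> lam"
    and zero: "\<And>\<nu>. \<nu> \<le> lam \<Longrightarrow> \<forall>\<mu>. \<not> \<mu> < \<nu> \<Longrightarrow> P \<nu>"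
    and succ: "\<And>\<mu> \<nu>. \<nu> \<le> lam \<Longrightarrow> immediate_pred \<mu> \<nu> \<Longrightarrow> P \<mu> \<Longrightarrow> P \<nu>"
    and limit: "\<And>\<nu>. \<nu> \<le> lam \<Longrightarrow> \<exists>\<mu>. \<mu> < \<nu> \<Longrightarrow> \<forall>\<mu><\<nu>. \<exists>\<kappa>. \<mu> < \<kappa> \<and> \<kappa> < \<nu> \<Longrightarrow>
      (\<And>\<mu>. \<mu> < \<nu> \<Longrightarrow> P \<mu>) \<Longrightarrow> P \<nu>"
  shows "P \<nu>"
  using assms(1)
proof (induction \<nu> rule: less_induct)
  case (less \<nu>)
  consider "\<forall>\<mu>. \<not> \<mu> < \<nu>" | \<mu> where "immediate_pred \<mu> \<nu>"
    | "\<exists>\<mu>. \<mu> < \<nu>" "\<forall>\<mu><\<nu>. \<exists>\<kappa>. \<mu> < \<kappa> \<and> \<kappa> < \<nu>"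
    unfolding immediate_pred_def by blast
  then show ?case
  proof cases
    case 2
    then show ?thesis
      using succ less unfolding immediate_pred_def by auto
  qed (use zero limit less in auto)
qed

lemma cell_attach_ends:
  "cell_attach Y Y' n \<Phi> \<Longrightarrow> \<exists>a\<in>mds_states Y. \<exists>b\<in>mds_states Y. \<forall>z\<in>disk n. \<Phi> (z, 0) = a \<and> \<Phi> (z, 1) = b"
  by (simp add: cell_attach_def)

lemma cell_attach_boundary_paths:
  "cell_attach Y Y' n \<Phi> \<Longrightarrow> z \<in> sphere_set n \<Longrightarrow> \<phi> \<in> Mrep 1 1 \<Longrightarrow> (\<lambda>t. \<Phi> (z, \<phi> t)) \<in> mds_paths Y"
  by (simp add: cell_attach_def)

lemma cell_attach_topspace:
  "cell_attach Y Y' n \<Phi> \<Longrightarrow> topspace (mds_top Y') = topspace (mds_top Y) \<union> \<Phi> ` (disk n \<times> {0..1})"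
  by (simp add: cell_attach_def)

lemma cell_attach_inj_on:
  "cell_attach Y Y' n \<Phi> \<Longrightarrow> inj_on \<Phi> ((disk n - sphere_set n) \<times> {0<..<1})"
  by (simp add: cell_attach_def)

lemma cell_attach_interior_notin:
  assumes "cell_attach Y Y' n \<Phi>" "z \<in> disk n - sphere_set n" "0 < s" "s < 1"
  shows "\<Phi> (z, s) \<notin> topspace (mds_top Y)"
proof -
  have "\<Phi> ` ((disk n - sphere_set n) \<times> {0<..<1}) \<inter> topspace (mds_top Y) = {}"
    using assms(1) by (simp add: cell_attach_def)
  moreover have "(z, s) \<in> (disk n - sphere_set n) \<times> {0<..<1}"
    using assms(2-4) by simp
  ultimately show ?thesis by blast
qed

lemma cell_attach_states: "cell_attach Y Y' n \<Phi> \<Longrightarrow> mds_states Y' = mds_states Y"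
  by (simp add: cell_attach_def)

lemma cell_attach_paths:
  "cell_attach Y Y' n \<Phi> \<Longrightarrow> mds_paths Y' =
    gen_paths (mds_paths Y \<union> {(\<lambda>t. \<Phi> (z, \<phi> t)) | z \<phi>. z \<in> disk n \<and> \<phi> \<in> Mrep 1 1})"
  by (simp add: cell_attach_def)

lemma gen_paths_empty: "gen_paths {} = {}"
proof -
  have "\<gamma> \<notin> gen_paths {}" for \<gamma> :: "real \<Rightarrow> 'a"
    by (rule notI, induction rule: gen_paths.induct) auto
  then show ?thesis by blast
qed

lemma cellular_towerD:
  assumes "cellular_tower S0 X lam" "\<nu> \<le> lam"
  shows cellular_tower_zero: "\<forall>\<mu>. \<not> \<mu> < \<nu> \<Longrightarrow>
      mds_top (X \<nu>) = discrete_topology S0 \<and> mds_states (X \<nu>) = S0 \<and> mds_paths (X \<nu>) = {}"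
    and cellular_tower_succ: "immediate_pred \<mu> \<nu> \<Longrightarrow> \<exists>n \<Phi>. cell_attach (X \<mu>) (X \<nu>) n \<Phi>"
    and cellular_tower_limit: "\<exists>\<mu>. \<mu> < \<nu> \<Longrightarrow> \<forall>\<mu><\<nu>. \<exists>\<kappa>. \<mu> < \<kappa> \<and> \<kappa> < \<nu> \<Longrightarrow>
      is_chain_colimit X \<nu>"
  using assms(1)[unfolded cellular_tower_def, rule_format, OF assms(2)]
  unfolding immediate_pred_def by (elim conjE; blast)+

lemma cellular_tower_obtain_cells:
  assumes "cellular_tower S0 X lam"
  obtains dim \<Phi> where
    "\<And>\<mu> \<nu>. \<nu> \<le> lam \<Longrightarrow> immediate_pred \<mu> \<nu> \<Longrightarrow> cell_attach (X \<mu>) (X \<nu>) (dim \<nu>) (\<Phi> \<nu>)"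
proof -
  have "\<exists>c. \<forall>\<mu>. \<nu> \<le> lam \<longrightarrow> immediate_pred \<mu> \<nu> \<longrightarrow> cell_attach (X \<mu>) (X \<nu>) (fst c) (snd c)" for \<nu>
  proof (cases "\<nu> \<le> lam \<and> (\<exists>\<mu>. immediate_pred \<mu> \<nu>)")
    case True
    then obtain \<mu> n \<Phi> where "immediate_pred \<mu> \<nu>" "cell_attach (X \<mu>) (X \<nu>) n \<Phi>"
      using cellular_tower_succ[OF assms] by blast
    then show ?thesis
      by (intro exI[of _ "(n, \<Phi>)"]) (auto dest: immediate_pred_unique)
  qed auto
  then obtain c where
    "\<And>\<mu> \<nu>. \<nu> \<le> lam \<Longrightarrow> immediate_pred \<mu> \<nu> \<Longrightarrow> cell_attach (X \<mu>) (X \<nu>) (fst (c \<nu>)) (snd (c \<nu>))"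
    by metis
  then show ?thesis by (rule that)
qed

text \<open>The cell attached at a successor stage \<open>\<nu>\<close> is fixed once and for all as \<open>(dim \<nu>, \<Phi> \<nu>)\<close>:
  with several choices of attaching map the open cells would not be injective in their interiors.\<close>

locale cellular_tower_cells =
  fixes S0 :: "'a set" and X :: "'i::wellorder \<Rightarrow> 'a mdspace" and lam :: 'i
    and dim :: "'i \<Rightarrow> nat" and \<Phi> :: "'i \<Rightarrow> (nat \<Rightarrow> real) \<times> real \<Rightarrow> 'a"
  assumes tower: "cellular_tower S0 X lam"
    and attach: "\<nu> \<le> lam \<Longrightarrow> immediate_pred \<mu> \<nu> \<Longrightarrow> cell_attach (X \<mu>) (X \<nu>) (dim \<nu>) (\<Phi> \<nu>)"
begin

lemma tower_states: "\<nu> \<le> lam \<Longrightarrow> mds_states (X \<nu>) = S0 \<and> S0 \<subseteq> topspace (mds_top (X \<nu>))"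
proof (induction rule: bounded_transfinite_induct)
  case (zero \<nu>)
  then show ?case using cellular_tower_zero[OF tower] by simp
next
  case (succ \<mu> \<nu>)
  then show ?case
    using cell_attach_states[OF attach] cell_attach_topspace[OF attach] by auto
next
  case (limit \<nu>)
  then show ?case
    using cellular_tower_limit[OF tower, of \<nu>] unfolding is_chain_colimit_def by auto
qed

lemma tower_mono:
  "\<nu> \<le> lam \<Longrightarrow> \<mu> \<le> \<nu> \<Longrightarrow>
    topspace (mds_top (X \<mu>)) \<subseteq> topspace (mds_top (X \<nu>)) \<and> mds_paths (X \<mu>) \<subseteq> mds_paths (X \<nu>)"
proof (induction arbitrary: \<mu> rule: bounded_transfinite_induct)
  case (zero \<nu>)
  then show ?case by (simp add: order.order_iff_strict)
next
  case (succ \<kappa> \<nu>)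
  then have "topspace (mds_top (X \<kappa>)) \<subseteq> topspace (mds_top (X \<nu>)) \<and> mds_paths (X \<kappa>) \<subseteq> mds_paths (X \<nu>)"
    using cell_attach_topspace[OF attach] cell_attach_paths[OF attach] by (auto intro: gen_paths.base)
  moreover have "\<mu> = \<nu> \<or> \<mu> \<le> \<kappa>"
    using succ.prems immediate_pred_le[OF succ.hyps(2)] by (auto simp: le_less)
  ultimately show ?case
    using succ.IH by blast
next
  case (limit \<nu>)
  show ?case
  proof (cases "\<mu> = \<nu>")
    case False
    then have "\<mu> < \<nu>" using limit.prems by simp
    moreover have "is_chain_colimit X \<nu>"
      using limit.hyps by (rule cellular_tower_limit[OF tower])
    ultimately show ?thesis
      unfolding is_chain_colimit_def by (blast intro: gen_paths.base)
  qed simp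
qed

lemma tower_paths_gen_paths: "\<nu> \<le> lam \<Longrightarrow> \<exists>Q. mds_paths (X \<nu>) = gen_paths Q"
proof (induction rule: bounded_transfinite_induct)
  case (zero \<nu>)
  then show ?case using cellular_tower_zero[OF tower] gen_paths_empty by metis
next
  case (succ \<mu> \<nu>)
  then show ?case using cell_attach_paths[OF attach] by (intro exI)
next
  case (limit \<nu>)
  then have "is_chain_colimit X \<nu>" by (intro cellular_tower_limit[OF tower])
  then show ?case unfolding is_chain_colimit_def by (elim conjE exI)
qed

definition open_cells :: "(real \<Rightarrow> 'a) set" where
  "open_cells = {(\<lambda>s. \<Phi> \<nu> (z, s)) | \<mu> \<nu> z.
     \<nu> \<le> lam \<and> immediate_pred \<mu> \<nu> \<and> z \<in> disk (dim \<nu>) - sphere_set (dim \<nu>)}"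

lemma open_cellsE:
  assumes "e \<in> open_cells"
  obtains \<mu> \<nu> z where "\<nu> \<le> lam" "immediate_pred \<mu> \<nu>" "z \<in> disk (dim \<nu>) - sphere_set (dim \<nu>)"
    "e = (\<lambda>s. \<Phi> \<nu> (z, s))"
  using assms unfolding open_cells_def by blast

lemma cell_in_stage:
  "\<nu> \<le> lam \<Longrightarrow> immediate_pred \<mu> \<nu> \<Longrightarrow> z \<in> disk (dim \<nu>) \<Longrightarrow> s \<in> {0..1} \<Longrightarrow>
    \<Phi> \<nu> (z, s) \<in> topspace (mds_top (X \<nu>))"
  using cell_attach_topspace[OF attach] by blast

lemma cell_interior_notin_earlier:
  assumes "\<nu> \<le> lam" "immediate_pred \<mu> \<nu>" "z \<in> disk (dim \<nu>) - sphere_set (dim \<nu>)" "0 < s" "s < 1"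
    and "\<kappa> < \<nu>"
  shows "\<Phi> \<nu> (z, s) \<notin> topspace (mds_top (X \<kappa>))"
proof -
  have "\<kappa> \<le> \<mu>" "\<mu> \<le> lam"
    using assms immediate_pred_le unfolding immediate_pred_def by auto
  then have "topspace (mds_top (X \<kappa>)) \<subseteq> topspace (mds_top (X \<mu>))"
    using tower_mono by blast
  then show ?thesis
    using cell_attach_interior_notin[OF attach[OF assms(1,2)] assms(3-5)] by blast
qed

lemma cell_family_open_cells: "cell_family S0 open_cells"
proof
  fix e assume "e \<in> open_cells"
  then obtain \<mu> \<nu> z where cell: "\<nu> \<le> lam" "immediate_pred \<mu> \<nu>"
    "z \<in> disk (dim \<nu>) - sphere_set (dim \<nu>)" "e = (\<lambda>s. \<Phi> \<nu> (z, s))"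
    by (rule open_cellsE)
  then have "\<mu> \<le> lam" unfolding immediate_pred_def by auto
  then have states: "mds_states (X \<mu>) = S0" "S0 \<subseteq> topspace (mds_top (X \<mu>))"
    using tower_states by auto
  then show "e 0 \<in> S0" "e 1 \<in> S0"
    using cell_attach_ends[OF attach[OF cell(1,2)]] cell(3,4) by auto
  show "e s \<notin> S0" if "0 < s" "s < 1" for s
    using cell_interior_notin_earlier[OF cell(1-3) that] cell(2,4) states(2)
    unfolding immediate_pred_def by blast
next
  fix e e' s s' assume cells: "e \<in> open_cells" "e' \<in> open_cells"
    and s: "0 < s" "s < 1" "0 < s'" "s' < 1" and eq: "e s = e' s'"
  obtain \<mu> \<nu> z where cell: "\<nu> \<le> lam" "immediate_pred \<mu> \<nu>"
    "z \<in> disk (dim \<nu>) - sphere_set (dim \<nu>)" "e = (\<lambda>s. \<Phi> \<nu> (z, s))"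
    using cells(1) by (rule open_cellsE)
  obtain \<mu>' \<nu>' z' where cell': "\<nu>' \<le> lam" "immediate_pred \<mu>' \<nu>'"
    "z' \<in> disk (dim \<nu>') - sphere_set (dim \<nu>')" "e' = (\<lambda>s. \<Phi> \<nu>' (z', s))"
    using cells(2) by (rule open_cellsE)
  have "\<not> \<nu>' < \<nu>"
    using cell_interior_notin_earlier[OF cell(1-3) s(1,2)] cell_in_stage[OF cell'(1,2), of z' s']
      cell(4) cell'(3,4) s eq by auto
  moreover have "\<not> \<nu> < \<nu>'"
    using cell_interior_notin_earlier[OF cell'(1-3) s(3,4)] cell_in_stage[OF cell(1,2), of z s]
      cell(3,4) cell'(4) s eq by auto
  ultimately have "\<nu> = \<nu>'" by simp
  then have "(z, s) = (z', s')"
    using inj_onD[OF cell_attach_inj_on[OF attach[OF cell(1,2)]]] cell(3,4) cell'(3,4) s eq by auto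
  then show "e = e' \<and> s = s'"
    using cell(4) cell'(4) \<open>\<nu> = \<nu>'\<close> by simp
qed

sublocale open_cells: cell_family S0 open_cells
  by (rule cell_family_open_cells)

lemma open_cells_subset_paths: "open_cells \<subseteq> mds_paths (X lam)"
proof
  fix e assume "e \<in> open_cells"
  then obtain \<mu> \<nu> z where cell: "\<nu> \<le> lam" "immediate_pred \<mu> \<nu>"
    "z \<in> disk (dim \<nu>) - sphere_set (dim \<nu>)" "e = (\<lambda>s. \<Phi> \<nu> (z, s))"
    by (rule open_cellsE)
  have "(\<lambda>t. t) \<in> Mrep 1 1"
    by (rule MrepI) (auto intro: continuous_on_id mono_onI)
  then have "e \<in> mds_paths (X \<nu>)"
    using cell cell_attach_paths[OF attach[OF cell(1,2)]] by (force intro: gen_paths.base)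
  then show "e \<in> mds_paths (X lam)"
    using tower_mono[OF order.refl cell(1)] by blast
qed

lemma tower_paths_factor_through_word:
  "\<nu> \<le> lam \<Longrightarrow> \<gamma> \<in> mds_paths (X \<nu>) \<Longrightarrow> factors_through_word open_cells 1 \<gamma>"
proof (induction arbitrary: \<gamma> rule: bounded_transfinite_induct)
  case (zero \<nu>)
  then show ?case using cellular_tower_zero[OF tower] by simp
next
  case (succ \<mu> \<nu>)
  note attached = attach[OF succ.hyps]
  show ?case
  proof (rule open_cells.gen_paths_factor_through_word)
    show "\<gamma> \<in> gen_paths (mds_paths (X \<mu>) \<union>
        {(\<lambda>t. \<Phi> \<nu> (z, \<phi> t)) | z \<phi>. z \<in> disk (dim \<nu>) \<and> \<phi> \<in> Mrep 1 1})"
      using succ.prems cell_attach_paths[OF attached] by simp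
  next
    fix q assume "q \<in> mds_paths (X \<mu>) \<union>
        {(\<lambda>t. \<Phi> \<nu> (z, \<phi> t)) | z \<phi>. z \<in> disk (dim \<nu>) \<and> \<phi> \<in> Mrep 1 1}"
    then consider "q \<in> mds_paths (X \<mu>)"
      | z \<phi> where "z \<in> disk (dim \<nu>) - sphere_set (dim \<nu>)" "\<phi> \<in> Mrep 1 1" "q = (\<lambda>t. \<Phi> \<nu> (z, \<phi> t))"
      using cell_attach_boundary_paths[OF attached] by blast
    then show "factors_through_word open_cells 1 q"
    proof cases
      case 1
      then show ?thesis by (rule succ.IH)
    next
      case 2
      then have "(\<lambda>s. \<Phi> \<nu> (z, s)) \<in> open_cells"
        unfolding open_cells_def using succ.hyps by blast
      then have "factors_through_word open_cells 1 ((\<lambda>s. \<Phi> \<nu> (z, s)) \<circ> \<phi>)"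
        using 2 by (intro factors_through_word_compose[OF factors_through_word_cell]) (auto simp: Mrep_def)
      then show ?thesis using 2 by (simp add: comp_def)
    qed
  qed
next
  case (limit \<nu>)
  then have "is_chain_colimit X \<nu>" by (intro cellular_tower_limit[OF tower])
  then have "\<gamma> \<in> gen_paths (\<Union>\<mu>\<in>{\<mu>. \<mu> < \<nu>}. mds_paths (X \<mu>))"
    using limit.prems unfolding is_chain_colimit_def by blast
  then show ?case
    by (rule open_cells.gen_paths_factor_through_word) (use limit.IH in blast)
qed

lemma sp_dpath_imp_reparametrized_path:
  assumes "sp_dpath (X lam) p"
  shows "\<exists>\<gamma> \<phi>. (\<gamma> \<in> mds_paths (X lam) \<or> (\<exists>x\<in>topspace (mds_top (X lam)). \<forall>t. \<gamma> t = x))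
    \<and> \<phi> \<in> Irep 1 \<and> (\<forall>t\<in>{0..1}. p t = \<gamma> (\<phi> t))"
  using assms unfolding sp_dpath_def
proof (elim disjE exE conjE bexE)
  fix x assume "x \<in> topspace (mds_top (X lam))" "\<forall>t\<in>{0..1}. p t = x"
  moreover have "(\<lambda>t. t) \<in> Irep 1"
    unfolding Irep_def by (auto intro: continuous_on_id mono_onI)
  ultimately show ?thesis by fastforce
next
  fix L :: "(real \<times> (real \<Rightarrow> 'a) \<times> (real \<Rightarrow> real)) list"
  define M where "M = map (\<lambda>(l, \<gamma>, \<phi>). (l, \<lambda>t. \<gamma> (\<phi> (t / l)))) L"
  assume L: "L \<noteq> []" "\<forall>(l, \<gamma>, \<phi>)\<in>set L. 0 < l \<and> \<gamma> \<in> mds_paths (X lam) \<and> \<phi> \<in> Irep 1"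
    "sum_list (map fst L) = 1" "moore_composable M" "\<forall>t\<in>{0..1}. p t = moore M t"
  have "\<forall>(l, f)\<in>set M. 0 < l \<and> factors_through_word open_cells l f"
    using L(2) tower_paths_factor_through_word[OF order.refl] factors_through_word_piece
    by (fastforce simp: M_def)
  moreover have "sum_list (map fst M) = 1"
    using L(3) by (simp add: M_def case_prod_beta comp_def)
  ultimately have "factors_through_word open_cells 1 (moore M)"
    using open_cells.factors_through_word_moore[of M] L(1,4) by (simp add: M_def)
  moreover obtain Q where "mds_paths (X lam) = gen_paths Q"
    using tower_paths_gen_paths by blast
  ultimately show ?thesis
    using factors_through_word_imp_reparametrized_path open_cells_subset_paths L(5) by metis
qed

end

lemma reparametrized_path_imp_sp_dpath:
  assumes "\<exists>\<gamma> \<phi>. (\<gamma> \<in> mds_paths X \<or> (\<exists>x\<in>topspace (mds_top X). \<forall>t. \<gamma> t = x))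
    \<and> \<phi> \<in> Irep 1 \<and> (\<forall>t\<in>{0..1}. p t = \<gamma> (\<phi> t))"
  shows "sp_dpath X p"
proof -
  obtain \<gamma> \<phi> where \<gamma>: "\<gamma> \<in> mds_paths X \<or> (\<exists>x\<in>topspace (mds_top X). \<forall>t. \<gamma> t = x)"
    and \<phi>: "\<phi> \<in> Irep 1" and p: "\<forall>t\<in>{0..1}. p t = \<gamma> (\<phi> t)"
    using assms by blast
  from \<gamma> show ?thesis
  proof
    assume "\<gamma> \<in> mds_paths X"
    then show ?thesis
      unfolding sp_dpath_def using \<phi> p by (intro disjI2 exI[of _ "[(1, \<gamma>, \<phi>)]"]) simp
  qed (use p in \<open>auto simp: sp_dpath_def\<close>)
qed

theorem theorem4p9:
  fixes S0 :: "'a set" and X :: "'i::wellorder \<Rightarrow> 'a mdspace" and lam :: 'i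
    and p :: "real \<Rightarrow> 'a"
  assumes "cellular_tower S0 X lam"
    and "continuous_map (top_of_set {0..1}) (mds_top (X lam)) p"
  shows "sp_dpath (X lam) p \<longleftrightarrow>
    (\<exists>\<gamma> \<phi>. (\<gamma> \<in> mds_paths (X lam) \<or> (\<exists>x\<in>topspace (mds_top (X lam)). \<forall>t. \<gamma> t = x))
          \<and> \<phi> \<in> Irep 1 \<and> (\<forall>t\<in>{0..1}. p t = \<gamma> (\<phi> t)))"
proof -
  obtain dim \<Phi> where "\<And>\<mu> \<nu>. \<nu> \<le> lam \<Longrightarrow> immediate_pred \<mu> \<nu> \<Longrightarrow> cell_attach (X \<mu>) (X \<nu>) (dim \<nu>) (\<Phi> \<nu>)"
    using cellular_tower_obtain_cells[OF assms(1)] by blast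
  then interpret cellular_tower_cells S0 X lam dim \<Phi>
    using assms(1) by unfold_locales
  show ?thesis
    by (rule iffI[OF sp_dpath_imp_reparametrized_path reparametrized_path_imp_sp_dpath])
qed

end
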